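(* Let $G=(V,E)$ be a network, $s,t\in V$, and $B\ge 0$ a CO-weight bound. There is an optimal solution $(\pi_1,\pi_2)$ of the CO-Constrained QoS Max-Survivability problem with bound $B$ such that all its disjoint segments are shortest disjoint segments.
   Context: A network is a directed graph $G=(V,E)$. Each link $e$ has failure probability $p_e\in(0,p_{max}]$ with $p_{max}<1$, and positive weight $w_e$. Paths are identified with link sets. A survivable connection is a pair $(\pi_1,\pi_2)$ of simple $s$–$t$ paths; the two paths may coincide. Its survivability level is $\prod_{e\in\pi_1\cap\pi_2}(1-p_e)$, equal to $1$ if empty. Its CO-weight is $\sum_{e\in\pi_1\cup\pi_2}w_e$. CO-CQMS problem: maximize survivability level subject to CO-weight $\le B$. A survivable connection is viewed as a concatenation of alternating segments: - common segments consist of links common to $\pi_1$ and $\pi_2$; - disjoint segments consist of links exclusive to one of the paths. A disjoint segment with head node $u$ and tail node $v$ is the pair formed by the subpath of $\pi_1$ from $u$ to $v$ and the subpath of $\pi_2$ from $u$ to $v$, which are link-disjoint. The weight of a disjoint segment is the total weight of its links. It is a shortest disjoint segment if its weight is minimum among all pairs of link-disjoint paths from $u$ to $v$ in $G$. *)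

theory Defs
  imports Complex_Main
begin

definition links :: "'v list \<Rightarrow> ('v \<times> 'v) set" where
  "links p = set (zip p (tl p))"

definition simple_path :: "('v \<times> 'v) set \<Rightarrow> 'v \<Rightarrow> 'v \<Rightarrow> 'v list \<Rightarrow> bool" where
  "simple_path E u v p \<longleftrightarrow> p \<noteq> [] \<and> hd p = u \<and> last p = v \<and> distinct p \<and> links p \<subseteq> E"

definition surv_level :: "('v \<times> 'v \<Rightarrow> real) \<Rightarrow> 'v list \<Rightarrow> 'v list \<Rightarrow> real" where
  "surv_level pf \<pi>1 \<pi>2 = (\<Prod>e\<in>links \<pi>1 \<inter> links \<pi>2. 1 - pf e)"

definition co_weight :: "('v \<times> 'v \<Rightarrow> real) \<Rightarrow> 'v list \<Rightarrow> 'v list \<Rightarrow> real" where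
  "co_weight w \<pi>1 \<pi>2 = (\<Sum>e\<in>links \<pi>1 \<union> links \<pi>2. w e)"

definition feasible_conn ::
  "('v \<times> 'v) set \<Rightarrow> ('v \<times> 'v \<Rightarrow> real) \<Rightarrow> real \<Rightarrow> 'v \<Rightarrow> 'v \<Rightarrow> 'v list \<Rightarrow> 'v list \<Rightarrow> bool" where
  "feasible_conn E w B s t \<pi>1 \<pi>2 \<longleftrightarrow>
     simple_path E s t \<pi>1 \<and> simple_path E s t \<pi>2 \<and> co_weight w \<pi>1 \<pi>2 \<le> B"

definition optimal_conn ::
  "('v \<times> 'v) set \<Rightarrow> ('v \<times> 'v \<Rightarrow> real) \<Rightarrow> ('v \<times> 'v \<Rightarrow> real) \<Rightarrow> real \<Rightarrow> 'v \<Rightarrow> 'v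
    \<Rightarrow> 'v list \<Rightarrow> 'v list \<Rightarrow> bool" where
  "optimal_conn E pf w B s t \<pi>1 \<pi>2 \<longleftrightarrow>
     feasible_conn E w B s t \<pi>1 \<pi>2 \<and>
     (\<forall>\<sigma>1 \<sigma>2. feasible_conn E w B s t \<sigma>1 \<sigma>2 \<longrightarrow> surv_level pf \<sigma>1 \<sigma>2 \<le> surv_level pf \<pi>1 \<pi>2)"

text \<open>Subpath of a vertex list between positions i and j (inclusive).\<close>
definition subpath :: "'v list \<Rightarrow> nat \<Rightarrow> nat \<Rightarrow> 'v list" where
  "subpath p i j = take (Suc j - i) (drop i p)"

definition excl_run :: "'v list \<Rightarrow> 'v list \<Rightarrow> nat \<Rightarrow> nat \<Rightarrow> bool" where
  "excl_run p q i j \<longleftrightarrow> i < j \<and> j < length p \<and>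
     (\<forall>k. i \<le> k \<and> k < j \<longrightarrow> (p ! k, p ! Suc k) \<notin> links q) \<and>
     (i = 0 \<or> (p ! (i - 1), p ! i) \<in> links q) \<and>
     (j = length p - 1 \<or> (p ! j, p ! Suc j) \<in> links q)"

text \<open>A disjoint segment of (\<pi>1,\<pi>2): a maximal run of links exclusive to \<pi>1 and a
  maximal run of links exclusive to \<pi>2, both from the same head u to the same tail v.\<close>
definition disjoint_segment :: "'v list \<Rightarrow> 'v list \<Rightarrow> 'v list \<Rightarrow> 'v list \<Rightarrow> bool" where
  "disjoint_segment \<pi>1 \<pi>2 \<sigma>1 \<sigma>2 \<longleftrightarrow>
     (\<exists>i1 j1 i2 j2. excl_run \<pi>1 \<pi>2 i1 j1 \<and> excl_run \<pi>2 \<pi>1 i2 j2 \<and>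
        \<sigma>1 = subpath \<pi>1 i1 j1 \<and> \<sigma>2 = subpath \<pi>2 i2 j2 \<and>
        hd \<sigma>1 = hd \<sigma>2 \<and> last \<sigma>1 = last \<sigma>2)"

definition pair_weight :: "('v \<times> 'v \<Rightarrow> real) \<Rightarrow> 'v list \<Rightarrow> 'v list \<Rightarrow> real" where
  "pair_weight w \<rho>1 \<rho>2 = (\<Sum>e\<in>links \<rho>1 \<union> links \<rho>2. w e)"

definition shortest_disjoint_segment ::
  "('v \<times> 'v) set \<Rightarrow> ('v \<times> 'v \<Rightarrow> real) \<Rightarrow> 'v list \<Rightarrow> 'v list \<Rightarrow> bool" where
  "shortest_disjoint_segment E w \<sigma>1 \<sigma>2 \<longleftrightarrow>
     (\<forall>\<rho>1 \<rho>2. simple_path E (hd \<sigma>1) (last \<sigma>1) \<rho>1 \<and> simple_path E (hd \<sigma>1) (last \<sigma>1) \<rho>2 \<and>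
        links \<rho>1 \<inter> links \<rho>2 = {} \<longrightarrow> pair_weight w \<sigma>1 \<sigma>2 \<le> pair_weight w \<rho>1 \<rho>2)"

end

theory Submission
  imports Defs "HOL-Library.Multiset"
begin

text \<open>Among the optimal connections, of which there are finitely many, choose one of least
  CO-weight. Suppose one of its disjoint segments, from u to v, could be replaced by a lighter
  pair of link-disjoint u-v paths. In the link set obtained by this replacement every s-t cut is
  crossed by two distinct links or by a link common to both original paths. A two-path version of
  Menger's theorem, in which common links have capacity two, then yields two s-t paths in the new
  link set that share only links common to the original paths. They form a connection that is at
  least as survivable and strictly lighter, contradicting the choice.\<close>

definition link_list :: "'v list \<Rightarrow> ('v \<times> 'v) list" where
  "link_list p = zip p (tl p)"

lemma links_eq_set_link_list: "links p = set (link_list p)"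
  by (simp add: links_def link_list_def)

lemma link_list_Nil [simp]: "link_list [] = []"
  and link_list_singleton [simp]: "link_list [x] = []"
  and link_list_Cons_Cons [simp]: "link_list (x # y # ys) = (x, y) # link_list (y # ys)"
  by (simp_all add: link_list_def)

lemma distinct_link_list: "distinct p \<Longrightarrow> distinct (link_list p)"
  by (simp add: link_list_def distinct_zipI1)

lemma finite_links [simp]: "finite (links p)"
  by (simp add: links_def)

lemma in_links_iff_nth: "e \<in> links p \<longleftrightarrow> (\<exists>k. Suc k < length p \<and> e = (p ! k, p ! Suc k))"
proof
  assume "e \<in> links p"
  then obtain n where "p ! n = fst e" "tl p ! n = snd e" "n < length (tl p)"
    unfolding links_def in_set_zip by blast
  then show "\<exists>k. Suc k < length p \<and> e = (p ! k, p ! Suc k)"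
    by (intro exI[of _ n]) (auto simp: nth_tl prod_eq_iff)
next
  assume "\<exists>k. Suc k < length p \<and> e = (p ! k, p ! Suc k)"
  then show "e \<in> links p"
    unfolding links_def in_set_zip by (auto simp: nth_tl)
qed

lemma nth_link_in_links: "Suc k < length p \<Longrightarrow> (p ! k, p ! Suc k) \<in> links p"
  using in_links_iff_nth by blast

lemma links_snoc: "p \<noteq> [] \<Longrightarrow> links (p @ [z]) = insert (last p, z) (links p)"
  by (induction p rule: induct_list012) (auto simp: links_eq_set_link_list)

lemma links_take_subset: "links (take n p) \<subseteq> links p"
proof
  fix e assume "e \<in> links (take n p)"
  then obtain k where "Suc k < length (take n p)" "e = (take n p ! k, take n p ! Suc k)"
    using in_links_iff_nth by metis
  then show "e \<in> links p" using nth_link_in_links[of k p] by auto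
qed

lemma simple_path_mono: "simple_path E u v p \<Longrightarrow> links p \<subseteq> H \<Longrightarrow> simple_path H u v p"
  by (simp add: simple_path_def)

lemma set_simple_path_subset: "simple_path E u v p \<Longrightarrow> set p \<subseteq> insert u (snd ` E)"
proof
  fix x assume p: "simple_path E u v p" and "x \<in> set p"
  then obtain k where k: "k < length p" "p ! k = x" by (auto simp: in_set_conv_nth)
  show "x \<in> insert u (snd ` E)"
  proof (cases k)
    case 0 then show ?thesis using p k by (metis hd_conv_nth insertI1 simple_path_def)
  next
    case (Suc m)
    then have "(p ! m, x) \<in> E" using p k nth_link_in_links[of m p] by (auto simp: simple_path_def)
    then show ?thesis by force
  qed
qed

lemma finite_simple_paths: "finite E \<Longrightarrow> finite {p. simple_path E u v p}"
proof (rule finite_subset[OF _ finite_subset_distinct])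
  show "{p. simple_path E u v p} \<subseteq> {p. set p \<subseteq> insert u (snd ` E) \<and> distinct p}"
    using set_simple_path_subset by (metis (mono_tags) Collect_mono simple_path_def)
qed simp

lemma rtrancl_imp_simple_path: "(u, v) \<in> H\<^sup>* \<Longrightarrow> \<exists>p. simple_path H u v p"
proof (induction rule: rtrancl_induct)
  case base
  show ?case by (rule exI[of _ "[u]"]) (simp add: simple_path_def links_def)
next
  case (step y z)
  then obtain p where p: "simple_path H u y p" by blast
  show ?case
  proof (cases "z \<in> set p")
    case True
    then obtain i where i: "i < length p" "p ! i = z" by (auto simp: in_set_conv_nth)
    have "last (take (Suc i) p) = z"
      using i by (simp add: take_Suc_conv_app_nth)
    then have "simple_path H u z (take (Suc i) p)"
      using p i links_take_subset[of "Suc i" p] by (auto simp: simple_path_def)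
    then show ?thesis by blast
  next
    case False
    then have "simple_path H u z (p @ [z])"
      using p step(2) by (auto simp: simple_path_def links_snoc)
    then show ?thesis by blast
  qed
qed

lemma length_subpath: "j < length p \<Longrightarrow> length (subpath p i j) = Suc j - i"
  by (simp add: subpath_def)

lemma nth_subpath: "j < length p \<Longrightarrow> k < Suc j - i \<Longrightarrow> subpath p i j ! k = p ! (i + k)"
  by (simp add: subpath_def)

lemma hd_subpath: "i \<le> j \<Longrightarrow> j < length p \<Longrightarrow> hd (subpath p i j) = p ! i"
  by (simp add: subpath_def hd_drop_conv_nth)

lemma last_subpath: "i \<le> j \<Longrightarrow> j < length p \<Longrightarrow> last (subpath p i j) = p ! j"
  by (simp add: subpath_def last_conv_nth)

lemma in_links_subpath_iff:
  assumes "j < length p"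
  shows "e \<in> links (subpath p i j) \<longleftrightarrow> (\<exists>k. i \<le> k \<and> k < j \<and> e = (p ! k, p ! Suc k))"
proof
  assume "e \<in> links (subpath p i j)"
  then obtain k where "Suc k < length (subpath p i j)" "e = (subpath p i j ! k, subpath p i j ! Suc k)"
    using in_links_iff_nth by metis
  then show "\<exists>k. i \<le> k \<and> k < j \<and> e = (p ! k, p ! Suc k)"
    using assms by (intro exI[of _ "i + k"]) (simp add: length_subpath nth_subpath)
next
  assume "\<exists>k. i \<le> k \<and> k < j \<and> e = (p ! k, p ! Suc k)"
  then obtain k where k: "i \<le> k" "k < j" "e = (p ! k, p ! Suc k)" by blast
  then have "Suc (k - i) < length (subpath p i j)" "e = (subpath p i j ! (k - i), subpath p i j ! Suc (k - i))"
    using assms by (simp_all add: length_subpath nth_subpath Suc_diff_le)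
  then show "e \<in> links (subpath p i j)" using nth_link_in_links by metis
qed

lemma links_subpath_subset: "j < length p \<Longrightarrow> links (subpath p i j) \<subseteq> links p"
  by (auto simp: in_links_subpath_iff nth_link_in_links)

lemma simple_path_subpath:
  assumes "simple_path E u v p" "i \<le> j" "j < length p"
  shows "simple_path (links p) (p ! i) (p ! j) (subpath p i j)"
proof -
  have "subpath p i j \<noteq> []" using assms(2,3) length_subpath[of j p i] by auto
  moreover have "distinct (subpath p i j)" using assms(1) by (simp add: simple_path_def subpath_def)
  ultimately show ?thesis
    using assms(2,3) by (simp add: simple_path_def hd_subpath last_subpath links_subpath_subset)
qed

lemma links_subpaths_disjoint:
  assumes "distinct p" "j1 \<le> i2" "j1 < length p" "j2 < length p"
  shows "links (subpath p i1 j1) \<inter> links (subpath p i2 j2) = {}"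
  using assms by (auto simp: in_links_subpath_iff nth_eq_iff_index_eq)

lemma simple_paths_around_subpath:
  assumes p: "simple_path E u v p" and ij: "i \<le> j" "j < length p"
  shows "simple_path (links p - links (subpath p i j)) u (p ! i) (subpath p 0 i)"
    and "simple_path (links p - links (subpath p i j)) (p ! j) v (subpath p j (length p - 1))"
proof -
  have p': "distinct p" "p ! 0 = u" "p ! (length p - 1) = v"
    using p by (auto simp: simple_path_def hd_conv_nth last_conv_nth)
  have "simple_path (links p) u (p ! i) (subpath p 0 i)"
    using simple_path_subpath[OF p, of 0 i] ij p' by simp
  moreover have "links (subpath p 0 i) \<inter> links (subpath p i j) = {}"
    using links_subpaths_disjoint[of p i i j 0] p' ij by simp
  ultimately show "simple_path (links p - links (subpath p i j)) u (p ! i) (subpath p 0 i)"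
    by (auto intro: simple_path_mono simp: simple_path_def)
  have "simple_path (links p) (p ! j) v (subpath p j (length p - 1))"
    using simple_path_subpath[OF p, of j "length p - 1"] ij p' by simp
  moreover have "links (subpath p i j) \<inter> links (subpath p j (length p - 1)) = {}"
    using links_subpaths_disjoint[of p j j "length p - 1" i] p' ij by simp
  ultimately show "simple_path (links p - links (subpath p i j)) (p ! j) v (subpath p j (length p - 1))"
    by (auto intro: simple_path_mono simp: simple_path_def)
qed

lemma nat_step_crossing:
  assumes "\<not> P a" "P b" "a \<le> b"
  obtains k where "a \<le> k" "k < b" "\<not> P k" "P (Suc k)"
  using assms(3,2)
proof (induction b rule: dec_induct)
  case base
  then show ?case using assms(1) by blast
next
  case (step n)
  show ?case
  proof (cases "P n")
    case True
    then show ?thesis using step by (meson less_SucI)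
  next
    case False
    then show ?thesis using step by blast
  qed
qed

lemma path_leaves_set:
  assumes "p \<noteq> []" "hd p \<in> S" "last p \<notin> S"
  shows "\<exists>e\<in>links p. fst e \<in> S \<and> snd e \<notin> S"
proof -
  have "\<not> p ! 0 \<notin> S" "p ! (length p - 1) \<notin> S"
    using assms by (auto simp: hd_conv_nth last_conv_nth)
  then obtain k where "k < length p - 1" "p ! k \<in> S" "p ! Suc k \<notin> S"
    by (rule nat_step_crossing[of "\<lambda>k. p ! k \<notin> S"]) auto
  then show ?thesis using nth_link_in_links[of k p] by force
qed

lemma path_enters_between_exits:
  assumes "e \<in> links p" "e' \<in> links p" "e \<noteq> e'"
    and "fst e \<in> S" "snd e \<notin> S" "fst e' \<in> S" "snd e' \<notin> S"
  shows "\<exists>x\<in>links p. fst x \<notin> S \<and> snd x \<in> S"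
proof -
  have enters: "\<exists>x\<in>links p. fst x \<notin> S \<and> snd x \<in> S"
    if ij: "i < j" "Suc j < length p" "p ! Suc i \<notin> S" "p ! j \<in> S" for i j
  proof -
    obtain k where "k < j" "p ! k \<notin> S" "p ! Suc k \<in> S"
      using nat_step_crossing[of "\<lambda>k. p ! k \<in> S" "Suc i" j] ij by auto
    then show ?thesis using nth_link_in_links[of k p] ij(2) by force
  qed
  obtain i j where "Suc i < length p" "e = (p ! i, p ! Suc i)" "Suc j < length p" "e' = (p ! j, p ! Suc j)"
    using assms(1,2) in_links_iff_nth by metis
  moreover have "i < j \<or> j < i" using calculation assms(3) by (metis linorder_neqE_nat)
  ultimately show ?thesis using enters assms(4-7) by auto
qed

lemma rtrancl_if_cuts_crossed:
  assumes "finite R" and "\<And>S. finite S \<Longrightarrow> s \<in> S \<Longrightarrow> t \<notin> S \<Longrightarrow> \<exists>e\<in>R. fst e \<in> S \<and> snd e \<notin> S"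
  shows "(s, t) \<in> R\<^sup>*"
proof (rule ccontr)
  assume "(s, t) \<notin> R\<^sup>*"
  moreover have "R\<^sup>* `` {s} \<subseteq> insert s (snd ` R)"
  proof
    fix x assume "x \<in> R\<^sup>* `` {s}"
    then have "(s, x) \<in> R\<^sup>*" by simp
    then show "x \<in> insert s (snd ` R)" by (cases rule: rtranclE) force+
  qed
  then have "finite (R\<^sup>* `` {s})" using assms(1) finite_subset by blast
  ultimately obtain e where "e \<in> R" "fst e \<in> R\<^sup>* `` {s}" "snd e \<notin> R\<^sup>* `` {s}"
    using assms(2) by blast
  then show False by (cases e) (auto intro: rtrancl_into_rtrancl)
qed

text \<open>The links of H leaving S have total capacity at least two, when the links in C have
  capacity two and all other links capacity one.\<close>

definition crossed_twice :: "('v \<times> 'v) set \<Rightarrow> ('v \<times> 'v) set \<Rightarrow> 'v set \<Rightarrow> bool" where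
  "crossed_twice H C S \<longleftrightarrow> (\<exists>e\<in>H \<inter> C. fst e \<in> S \<and> snd e \<notin> S) \<or>
     (\<exists>e\<in>H. \<exists>e'\<in>H. e \<noteq> e' \<and> fst e \<in> S \<and> snd e \<notin> S \<and> fst e' \<in> S \<and> snd e' \<notin> S)"

lemma crossed_twice_if_two_paths:
  assumes "simple_path H u v p1" "simple_path H u v p2" "links p1 \<inter> links p2 \<subseteq> C"
    and "u \<in> S" "v \<notin> S"
  shows "crossed_twice H C S"
proof -
  obtain e1 where "e1 \<in> links p1" "fst e1 \<in> S" "snd e1 \<notin> S"
    using path_leaves_set[of p1 S] assms by (auto simp: simple_path_def)
  moreover obtain e2 where "e2 \<in> links p2" "fst e2 \<in> S" "snd e2 \<notin> S"
    using path_leaves_set[of p2 S] assms by (auto simp: simple_path_def)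
  ultimately show ?thesis
    using assms(1-3) unfolding crossed_twice_def simple_path_def by (cases "e1 = e2") blast+
qed

subsection \<open>Flows as multisets of links\<close>

definition out_deg :: "('v \<times> 'v) multiset \<Rightarrow> 'v \<Rightarrow> nat" where
  "out_deg M v = size {# e \<in># M. fst e = v #}"

definition in_deg :: "('v \<times> 'v) multiset \<Rightarrow> 'v \<Rightarrow> nat" where
  "in_deg M v = size {# e \<in># M. snd e = v #}"

text \<open>Each copy of a link in M carries one unit of flow.\<close>

definition st_flow :: "('v \<times> 'v) multiset \<Rightarrow> 'v \<Rightarrow> 'v \<Rightarrow> nat \<Rightarrow> bool" where
  "st_flow M s t k \<longleftrightarrow>
     (\<forall>v. out_deg M v + (if v = t then k else 0) = in_deg M v + (if v = s then k else 0))"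

lemma out_deg_plus: "out_deg (M + N) v = out_deg M v + out_deg N v"
  and in_deg_plus: "in_deg (M + N) v = in_deg M v + in_deg N v"
  by (simp_all add: out_deg_def in_deg_def)

lemma out_deg_mono: "N \<subseteq># M \<Longrightarrow> out_deg N v \<le> out_deg M v"
  and in_deg_mono: "N \<subseteq># M \<Longrightarrow> in_deg N v \<le> in_deg M v"
  by (simp_all add: out_deg_def in_deg_def size_mset_mono multiset_filter_mono)

lemma out_deg_minus: "N \<subseteq># M \<Longrightarrow> out_deg (M - N) v = out_deg M v - out_deg N v"
  and in_deg_minus: "N \<subseteq># M \<Longrightarrow> in_deg (M - N) v = in_deg M v - in_deg N v"
  by (simp_all add: out_deg_def in_deg_def size_Diff_submset multiset_filter_mono)

lemma out_deg_swap: "out_deg (image_mset prod.swap M) v = in_deg M v"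
  and in_deg_swap: "in_deg (image_mset prod.swap M) v = out_deg M v"
  by (simp_all add: out_deg_def in_deg_def filter_mset_image_mset)

lemma out_deg_add_mset: "out_deg (add_mset e M) v = (if fst e = v then 1 else 0) + out_deg M v"
  and in_deg_add_mset: "in_deg (add_mset e M) v = (if snd e = v then 1 else 0) + in_deg M v"
  by (simp_all add: out_deg_def in_deg_def)

lemma st_flow_link_list: "p \<noteq> [] \<Longrightarrow> st_flow (mset (link_list p)) (hd p) (last p) 1"
proof (induction p rule: induct_list012)
  case (3 x y zs)
  show ?case
    unfolding st_flow_def
  proof
    fix v
    define out_rest where "out_rest = out_deg (mset (link_list (y # zs))) v"
    define in_rest where "in_rest = in_deg (mset (link_list (y # zs))) v"
    have "out_rest + (if v = last (y # zs) then 1 else 0) = in_rest + (if v = hd (y # zs) then 1 else 0)"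
      using 3(2) unfolding st_flow_def out_rest_def in_rest_def by blast
    moreover have "out_deg (mset (link_list (x # y # zs))) v = (if x = v then 1 else 0) + out_rest"
      "in_deg (mset (link_list (x # y # zs))) v = (if y = v then 1 else 0) + in_rest"
      by (simp_all add: out_rest_def in_rest_def out_deg_add_mset in_deg_add_mset)
    ultimately show "out_deg (mset (link_list (x # y # zs))) v + (if v = last (x # y # zs) then 1 else 0)
        = in_deg (mset (link_list (x # y # zs))) v + (if v = hd (x # y # zs) then 1 else 0)"
      by auto
  qed
qed (simp_all add: st_flow_def out_deg_def in_deg_def)

lemma st_flow_minus:
  assumes "N \<subseteq># M" "st_flow M s t (k + l)" "st_flow N s t l"
  shows "st_flow (M - N) s t k"
  unfolding st_flow_def
proof
  fix v
  have "out_deg N v \<le> out_deg M v" "in_deg N v \<le> in_deg M v"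
    using assms(1) by (simp_all add: out_deg_mono in_deg_mono)
  moreover have "out_deg M v + (if v = t then k + l else 0) = in_deg M v + (if v = s then k + l else 0)"
    "out_deg N v + (if v = t then l else 0) = in_deg N v + (if v = s then l else 0)"
    using assms(2,3) by (simp_all add: st_flow_def)
  ultimately show "out_deg (M - N) v + (if v = t then k else 0) = in_deg (M - N) v + (if v = s then k else 0)"
    unfolding out_deg_minus[OF assms(1)] in_deg_minus[OF assms(1)] by (simp split: if_splits)
qed

lemma st_flow_cancel_reversed:
  assumes A: "st_flow A s t k" and FB: "st_flow (F + B) s t l"
    and cancelled: "image_mset prod.swap B \<subseteq># A"
  shows "st_flow (A + F - image_mset prod.swap B) s t (k + l)"
  unfolding st_flow_def
proof
  fix v
  have cancelled': "image_mset prod.swap B \<subseteq># A + F"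
    using cancelled by (simp add: subset_mset.add_increasing2)
  have "out_deg A v + (if v = t then k else 0) = in_deg A v + (if v = s then k else 0)"
    "out_deg (F + B) v + (if v = t then l else 0) = in_deg (F + B) v + (if v = s then l else 0)"
    using A FB unfolding st_flow_def by blast+
  moreover have "in_deg B v \<le> out_deg A v" "out_deg B v \<le> in_deg A v"
    using out_deg_mono[OF cancelled] in_deg_mono[OF cancelled] by (simp_all add: out_deg_swap in_deg_swap)
  ultimately show "out_deg (A + F - image_mset prod.swap B) v + (if v = t then k + l else 0)
      = in_deg (A + F - image_mset prod.swap B) v + (if v = s then k + l else 0)"
    unfolding out_deg_minus[OF cancelled'] in_deg_minus[OF cancelled']
    by (simp add: out_deg_plus in_deg_plus out_deg_swap in_deg_swap split: if_splits)
qed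

lemma sum_size_filter_mset_eq:
  assumes "finite S"
  shows "(\<Sum>v\<in>S. size {# e \<in># M. f e = v #}) = size {# e \<in># M. f e \<in> S #}"
proof (induction M)
  case (add x M)
  have "(\<Sum>v\<in>S. size {# e \<in># add_mset x M. f e = v #})
      = (\<Sum>v\<in>S. (if f x = v then 1 else 0) + size {# e \<in># M. f e = v #})"
    by (intro sum.cong) auto
  also have "\<dots> = (\<Sum>v\<in>S. (if f x = v then 1 else 0)) + (\<Sum>v\<in>S. size {# e \<in># M. f e = v #})"
    by (rule sum.distrib)
  also have "(\<Sum>v\<in>S. (if f x = v then 1 else 0)) = (if f x \<in> S then 1 else (0::nat))"
    using assms by (simp add: sum.delta)
  finally show ?case using add by simp
qed simp

lemma st_flow_leaves_finite_cut:
  assumes "st_flow M s t k" "0 < k" "finite S" "s \<in> S" "t \<notin> S"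
  shows "\<exists>e\<in>#M. fst e \<in> S \<and> snd e \<notin> S"
proof (rule ccontr)
  assume "\<not> ?thesis"
  then have "{# e \<in># M. fst e \<in> S #} \<subseteq># {# e \<in># M. snd e \<in> S #}"
    by (intro mset_subset_eqI) (auto simp: not_in_iff)
  moreover have "(\<Sum>v\<in>S. out_deg M v + (if v = t then k else 0)) = (\<Sum>v\<in>S. in_deg M v + (if v = s then k else 0))"
    using assms(1) by (simp add: st_flow_def)
  then have "size {# e \<in># M. fst e \<in> S #} = size {# e \<in># M. snd e \<in> S #} + k"
    using assms(3-5) by (simp add: sum.distrib out_deg_def in_deg_def sum_size_filter_mset_eq sum.delta')
  ultimately show False using size_mset_mono assms(2) by fastforce
qed

lemma st_flow_simple_path:
  assumes "st_flow M s t k" "0 < k"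
  shows "\<exists>p. simple_path (set_mset M) s t p"
proof -
  have "(s, t) \<in> (set_mset M)\<^sup>*"
    using st_flow_leaves_finite_cut[OF assms] by (intro rtrancl_if_cuts_crossed) auto
  then show ?thesis by (rule rtrancl_imp_simple_path)
qed

lemma mset_subset_if_distinct: "distinct xs \<Longrightarrow> set xs \<subseteq> set_mset M \<Longrightarrow> mset xs \<subseteq># M"
  by (rule mset_subset_eqI) (auto simp: distinct_count_atmost_1 count_eq_zero_iff[symmetric])

lemma count_mset_le_1_if_distinct: "distinct xs \<Longrightarrow> count (mset xs) x \<le> 1"
  by (induction xs) auto

lemma st_flow_two_simple_paths:
  assumes "st_flow M s t 2"
  obtains p1 p2 where "simple_path (set_mset M) s t p1" "simple_path (set_mset M) s t p2"
    "\<forall>e\<in>links p1 \<inter> links p2. 2 \<le> count M e"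
proof -
  obtain p1 where p1: "simple_path (set_mset M) s t p1"
    using st_flow_simple_path[OF assms] by auto
  let ?P = "mset (link_list p1)"
  have distinct: "distinct (link_list p1)"
    using p1 by (simp add: simple_path_def distinct_link_list)
  have sub: "?P \<subseteq># M"
    using p1 distinct by (simp add: mset_subset_if_distinct links_eq_set_link_list simple_path_def)
  have "st_flow (M - ?P) s t 1"
    using st_flow_minus[OF sub, of s t 1 1] assms st_flow_link_list[of p1] p1
    by (simp add: simple_path_def numeral_2_eq_2)
  then obtain p2 where p2: "simple_path (set_mset (M - ?P)) s t p2"
    using st_flow_simple_path[of "M - ?P" s t 1] by auto
  have "2 \<le> count M e" if "e \<in> links p1" "e \<in> links p2" for e
  proof -
    have "count ?P e = 1"
      using that(1) distinct by (metis distinct_count_atmost_1 links_eq_set_link_list)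
    moreover have "e \<in># M - ?P" using that(2) p2 by (auto simp: simple_path_def)
    then have "0 < count (M - ?P) e" by (simp only: count_greater_zero_iff)
    moreover have "count M e = count (M - ?P) e + count ?P e"
      using sub by (metis subset_mset.diff_add count_union)
    ultimately show ?thesis by linarith
  qed
  moreover have "links p2 \<subseteq> set_mset M"
    using p2 by (auto simp: simple_path_def dest: in_diffD)
  then have "simple_path (set_mset M) s t p2" by (rule simple_path_mono[OF p2])
  ultimately show ?thesis using p1 that by blast
qed

subsection \<open>A two-path Menger theorem\<close>

text \<open>The residual network of H after routing one unit along P, when the links in C have
  capacity two: links of H that still have spare capacity, and the links of P reversed.\<close>

definition residual :: "('v \<times> 'v) set \<Rightarrow> ('v \<times> 'v) set \<Rightarrow> 'v list \<Rightarrow> ('v \<times> 'v) set" where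
  "residual H C P = {e \<in> H. e \<in> C \<or> e \<notin> links P} \<union> (links P)\<inverse>"

lemma finite_residual: "finite H \<Longrightarrow> finite (residual H C P)"
  by (simp add: residual_def)

lemma residual_leaves_cut:
  assumes "crossed_twice H C S"
  shows "\<exists>e\<in>residual H C P. fst e \<in> S \<and> snd e \<notin> S"
  using assms unfolding crossed_twice_def
proof (elim disjE bexE conjE)
  fix e e' assume e: "e \<in> H" "e' \<in> H" "e \<noteq> e'"
    and leave: "fst e \<in> S" "snd e \<notin> S" "fst e' \<in> S" "snd e' \<notin> S"
  show ?thesis
  proof (cases "e \<in> links P \<and> e' \<in> links P")
    case True
    then obtain x where x: "x \<in> links P" "fst x \<notin> S" "snd x \<in> S"
      using path_enters_between_exits e(3) leave by blast
    have "prod.swap x \<in> residual H C P"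
      using x(1) by (cases x) (simp add: residual_def)
    then show ?thesis using x by (intro bexI) (simp_all add: fst_swap snd_swap)
  next
    case False
    then show ?thesis using e leave by (auto simp: residual_def)
  qed
qed (auto simp: residual_def)

text \<open>Augmenting the path P along a path Q of the residual network yields a flow of value two:
  the backward links of Q cancel links of P, and a link is used twice only if it lies on P
  and is traversed forward by Q, which the residual network allows only for links in C.\<close>

lemma augment_along_residual_path:
  assumes P: "simple_path H s t P" and Q: "simple_path (residual H C P) s t Q"
  obtains M where "st_flow M s t 2" "set_mset M \<subseteq> H" "\<And>e. 2 \<le> count M e \<Longrightarrow> e \<in> C"
proof -
  define fwd where "fwd e \<longleftrightarrow> e \<in> H \<and> (e \<in> C \<or> e \<notin> links P)" for e
  define LP where "LP = mset (link_list P)"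
  define F where "F = filter_mset fwd (mset (link_list Q))"
  define Bw where "Bw = filter_mset (\<lambda>e. \<not> fwd e) (mset (link_list Q))"
  define M where "M = LP + F - image_mset prod.swap Bw"
  have dP: "distinct (link_list P)" and dQ: "distinct (link_list Q)"
    using P Q by (simp_all add: simple_path_def distinct_link_list)
  have "image_mset prod.swap Bw = mset (map prod.swap (filter (\<lambda>e. \<not> fwd e) (link_list Q)))"
    by (simp add: Bw_def)
  also have "\<dots> \<subseteq># LP"
    unfolding LP_def using dQ Q
    by (intro mset_subset_if_distinct)
      (auto simp: distinct_map inj_on_def simple_path_def residual_def fwd_def links_eq_set_link_list)
  finally have cancelled: "image_mset prod.swap Bw \<subseteq># LP" .
  have "st_flow LP s t 1" "st_flow (F + Bw) s t 1"
    using st_flow_link_list[of P] st_flow_link_list[of Q] P Q multiset_partition[of "mset (link_list Q)" fwd]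
    by (simp_all add: LP_def F_def Bw_def simple_path_def)
  then have "st_flow M s t (1 + 1)"
    unfolding M_def by (rule st_flow_cancel_reversed[OF _ _ cancelled])
  then have "st_flow M s t 2" by (simp add: numeral_2_eq_2)
  moreover have "set_mset M \<subseteq> H"
    using P by (auto simp: M_def LP_def F_def fwd_def simple_path_def links_eq_set_link_list dest!: in_diffD)
  moreover have "e \<in> C" if "2 \<le> count M e" for e
  proof -
    have "count LP e \<le> 1" "count F e \<le> 1"
      using count_mset_le_1_if_distinct[OF dP] count_mset_le_1_if_distinct[OF dQ]
      by (simp_all add: LP_def F_def)
    moreover have "count M e \<le> count LP e + count F e" by (simp add: M_def)
    ultimately have "0 < count LP e" "0 < count F e" using that by linarith+
    then have "e \<in># LP" "e \<in># F" by simp_all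
    then show "e \<in> C" by (auto simp: LP_def F_def fwd_def links_eq_set_link_list)
  qed
  ultimately show ?thesis using that by blast
qed

theorem two_paths_if_cuts_crossed_twice:
  assumes "finite H" and cuts: "\<And>S. s \<in> S \<Longrightarrow> t \<notin> S \<Longrightarrow> crossed_twice H C S"
  obtains P1 P2 where "simple_path H s t P1" "simple_path H s t P2" "links P1 \<inter> links P2 \<subseteq> C"
proof -
  have "(s, t) \<in> H\<^sup>*"
    using assms(1) cuts by (intro rtrancl_if_cuts_crossed) (auto simp: crossed_twice_def)
  then obtain P where P: "simple_path H s t P" by (blast dest: rtrancl_imp_simple_path)
  have "(s, t) \<in> (residual H C P)\<^sup>*"
    using finite_residual[OF assms(1)] cuts residual_leaves_cut by (intro rtrancl_if_cuts_crossed) blast+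
  then obtain Q where Q: "simple_path (residual H C P) s t Q" by (blast dest: rtrancl_imp_simple_path)
  obtain M where M: "st_flow M s t 2" "set_mset M \<subseteq> H" "\<And>e. 2 \<le> count M e \<Longrightarrow> e \<in> C"
    using augment_along_residual_path[OF P Q] by blast
  obtain P1 P2 where "simple_path (set_mset M) s t P1" "simple_path (set_mset M) s t P2"
    and "\<forall>e\<in>links P1 \<inter> links P2. 2 \<le> count M e"
    using st_flow_two_simple_paths[OF M(1)] by blast
  then have "simple_path H s t P1" "simple_path H s t P2" "links P1 \<inter> links P2 \<subseteq> C"
    using M(2,3) by (auto simp: simple_path_def)
  then show ?thesis by (rule that)
qed

lemma excl_run_links_disjoint: "excl_run p q i j \<Longrightarrow> links (subpath p i j) \<inter> links q = {}"
  by (auto simp: excl_run_def in_links_subpath_iff)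

lemma exchange_disjoint_segment:
  assumes p: "simple_path E s t p" and q: "simple_path E s t q"
    and seg: "disjoint_segment p q \<sigma>1 \<sigma>2"
    and \<rho>1: "simple_path E (hd \<sigma>1) (last \<sigma>1) \<rho>1" and \<rho>2: "simple_path E (hd \<sigma>1) (last \<sigma>1) \<rho>2"
    and \<rho>_disjoint: "links \<rho>1 \<inter> links \<rho>2 = {}"
  defines "H \<equiv> links p \<union> links q - (links \<sigma>1 \<union> links \<sigma>2) \<union> (links \<rho>1 \<union> links \<rho>2)"
  obtains P1 P2 where "simple_path H s t P1" "simple_path H s t P2"
    "links P1 \<inter> links P2 \<subseteq> links p \<inter> links q"
proof -
  obtain i1 j1 i2 j2 where run1: "excl_run p q i1 j1" and run2: "excl_run q p i2 j2"
    and \<sigma>: "\<sigma>1 = subpath p i1 j1" "\<sigma>2 = subpath q i2 j2" "hd \<sigma>1 = hd \<sigma>2" "last \<sigma>1 = last \<sigma>2"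
    using seg unfolding disjoint_segment_def by blast
  have ij: "i1 < j1" "j1 < length p" "i2 < j2" "j2 < length q"
    using run1 run2 by (simp_all add: excl_run_def)
  define u where "u = p ! i1"
  define v where "v = p ! j1"
  have uv: "hd \<sigma>1 = u" "last \<sigma>1 = v" "q ! i2 = u" "q ! j2 = v"
    using \<sigma> ij by (simp_all add: hd_subpath last_subpath u_def v_def)
  have "links p - links \<sigma>1 \<subseteq> H" "links q - links \<sigma>2 \<subseteq> H"
    using excl_run_links_disjoint[OF run1] excl_run_links_disjoint[OF run2] \<sigma>(1,2)
    by (auto simp: H_def)
  then have A: "simple_path H s u (subpath p 0 i1)" "simple_path H s u (subpath q 0 i2)"
    and Z: "simple_path H v t (subpath p j1 (length p - 1))" "simple_path H v t (subpath q j2 (length q - 1))"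
    using simple_paths_around_subpath[OF p, of i1 j1] simple_paths_around_subpath[OF q, of i2 j2] ij \<sigma> uv
    by (auto simp: u_def v_def simple_path_def)
  have R: "simple_path H u v \<rho>1" "simple_path H u v \<rho>2"
    using \<rho>1 \<rho>2 uv by (auto simp: H_def simple_path_def)
  have cuts: "crossed_twice H (links p \<inter> links q) S" if cut: "s \<in> S" "t \<notin> S" for S
  proof -
    have common: "links (subpath p k l) \<inter> links (subpath q k' l') \<subseteq> links p \<inter> links q"
      if "l < length p" "l' < length q" for k l k' l'
      using that links_subpath_subset by blast
    consider "u \<in> S" "v \<notin> S" | "u \<notin> S" | "v \<in> S" by blast
    then show ?thesis
    proof cases
      case 1
      show ?thesis by (rule crossed_twice_if_two_paths[OF R _ 1]) (simp add: \<rho>_disjoint)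
    next
      case 2
      show ?thesis by (rule crossed_twice_if_two_paths[OF A _ cut(1) 2]) (rule common; use ij in simp)
    next
      case 3
      show ?thesis by (rule crossed_twice_if_two_paths[OF Z _ 3 cut(2)]) (rule common; use ij in simp)
    qed
  qed
  have "finite H" by (simp add: H_def)
  then show ?thesis using two_paths_if_cuts_crossed_twice[OF _ cuts] that by blast
qed

lemma links_disjoint_segment_subset:
  "disjoint_segment p q \<sigma>1 \<sigma>2 \<Longrightarrow> links \<sigma>1 \<subseteq> links p \<and> links \<sigma>2 \<subseteq> links q"
  by (auto simp: disjoint_segment_def excl_run_def dest: links_subpath_subset[THEN subsetD])

lemma sum_replace_le:
  fixes w :: "'a \<Rightarrow> real"
  assumes "finite U" "finite R" "L \<subseteq> U" "\<forall>e\<in>R. 0 \<le> w e"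
  shows "sum w (U - L \<union> R) \<le> sum w U - sum w L + sum w R"
proof -
  have "sum w (U - L \<union> R) = sum w (U - L) + sum w R - sum w ((U - L) \<inter> R)"
    using assms(1,2) by (intro sum_Un) auto
  moreover have "0 \<le> sum w ((U - L) \<inter> R)"
    using assms(4) by (intro sum_nonneg) auto
  moreover have "sum w (U - L) = sum w U - sum w L"
    using assms(1,3) by (simp add: sum_diff finite_subset)
  ultimately show ?thesis by linarith
qed

lemma prod_antimono_unit_interval:
  fixes f :: "'a \<Rightarrow> 'b :: linordered_idom"
  assumes "finite B" "A \<subseteq> B" "\<forall>e\<in>B. 0 \<le> f e \<and> f e \<le> 1"
  shows "prod f B \<le> prod f A"
proof -
  have "prod f B = prod f (B - A) * prod f A"
    using assms(1,2) prod.subset_diff by blast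
  moreover have "prod f (B - A) \<le> 1" "0 \<le> prod f A" "0 \<le> prod f (B - A)"
    using assms by (auto intro!: prod_le_1 prod_nonneg)
  ultimately show ?thesis by (simp add: mult_left_le_one_le)
qed

lemma exchange_disjoint_segment_improves:
  assumes w: "\<forall>e\<in>E. 0 \<le> w e" and pf: "\<forall>e\<in>E. 0 \<le> pf e \<and> pf e \<le> 1"
    and p: "simple_path E s t p" and q: "simple_path E s t q"
    and seg: "disjoint_segment p q \<sigma>1 \<sigma>2"
    and \<rho>1: "simple_path E (hd \<sigma>1) (last \<sigma>1) \<rho>1" and \<rho>2: "simple_path E (hd \<sigma>1) (last \<sigma>1) \<rho>2"
    and \<rho>_disjoint: "links \<rho>1 \<inter> links \<rho>2 = {}"
    and lighter: "pair_weight w \<rho>1 \<rho>2 < pair_weight w \<sigma>1 \<sigma>2"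
  obtains P1 P2 where "simple_path E s t P1" "simple_path E s t P2"
    "co_weight w P1 P2 < co_weight w p q" "surv_level pf p q \<le> surv_level pf P1 P2"
proof -
  define H where "H = links p \<union> links q - (links \<sigma>1 \<union> links \<sigma>2) \<union> (links \<rho>1 \<union> links \<rho>2)"
  obtain P1 P2 where P: "simple_path H s t P1" "simple_path H s t P2"
    and common: "links P1 \<inter> links P2 \<subseteq> links p \<inter> links q"
    using exchange_disjoint_segment[OF p q seg \<rho>1 \<rho>2 \<rho>_disjoint] unfolding H_def by blast
  have E: "links p \<union> links q \<subseteq> E" "links \<rho>1 \<union> links \<rho>2 \<subseteq> E"
    using p q \<rho>1 \<rho>2 by (auto simp: simple_path_def)
  then have "H \<subseteq> E" by (auto simp: H_def)
  have "co_weight w P1 P2 \<le> sum w H"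
    unfolding co_weight_def using P \<open>H \<subseteq> E\<close> w
    by (intro sum_mono2) (auto simp: H_def simple_path_def)
  also have "\<dots> \<le> co_weight w p q - pair_weight w \<sigma>1 \<sigma>2 + pair_weight w \<rho>1 \<rho>2"
    unfolding H_def co_weight_def pair_weight_def using links_disjoint_segment_subset[OF seg] E w
    by (intro sum_replace_le) auto
  also have "\<dots> < co_weight w p q" using lighter by simp
  finally have "co_weight w P1 P2 < co_weight w p q" .
  moreover have "surv_level pf p q \<le> surv_level pf P1 P2"
    unfolding surv_level_def using common E pf
    by (intro prod_antimono_unit_interval) auto
  moreover have "simple_path E s t P1" "simple_path E s t P2"
    using P \<open>H \<subseteq> E\<close> by (auto simp: simple_path_def)
  ultimately show ?thesis using that by blast
qed

lemma exists_optimal_conn_of_least_co_weight: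
  assumes "finite E" "\<exists>\<pi>1 \<pi>2. feasible_conn E w B s t \<pi>1 \<pi>2"
  obtains p q where "optimal_conn E pf w B s t p q"
    "\<And>\<pi>1 \<pi>2. optimal_conn E pf w B s t \<pi>1 \<pi>2 \<Longrightarrow> co_weight w p q \<le> co_weight w \<pi>1 \<pi>2"
proof -
  define F where "F = {(\<pi>1, \<pi>2). feasible_conn E w B s t \<pi>1 \<pi>2}"
  define Opt where "Opt = {(\<pi>1, \<pi>2). optimal_conn E pf w B s t \<pi>1 \<pi>2}"
  define sv where "sv = (\<lambda>(\<pi>1, \<pi>2). surv_level pf \<pi>1 \<pi>2)"
  define cw where "cw = (\<lambda>(\<pi>1, \<pi>2). co_weight w \<pi>1 \<pi>2)"
  have "F \<subseteq> {p. simple_path E s t p} \<times> {p. simple_path E s t p}"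
    by (auto simp: F_def feasible_conn_def)
  then have "finite F" using finite_simple_paths[OF assms(1)] finite_subset by blast
  moreover have "F \<noteq> {}" using assms(2) by (auto simp: F_def)
  ultimately obtain x where "x \<in> F" "sv x = Max (sv ` F)"
    by (metis (no_types, lifting) Max_in empty_is_image finite_imageI imageE)
  then have "x \<in> Opt"
    using Max_ge[OF finite_imageI[OF \<open>finite F\<close>], of _ sv]
    by (auto simp: Opt_def F_def sv_def optimal_conn_def split: prod.splits)
  then have "Opt \<noteq> {}" by blast
  moreover have "Opt \<subseteq> F" by (auto simp: Opt_def F_def optimal_conn_def)
  then have "finite Opt" using \<open>finite F\<close> finite_subset by blast
  ultimately have "arg_min_on cw Opt \<in> Opt" "\<forall>y\<in>Opt. cw (arg_min_on cw Opt) \<le> cw y"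
    by (simp_all add: arg_min_if_finite(1) arg_min_least)
  then show ?thesis
    using that by (auto simp: Opt_def cw_def split: prod.splits)
qed

theorem lemma6:
  fixes V :: "'v set" and E :: "('v \<times> 'v) set"
    and pf w :: "'v \<times> 'v \<Rightarrow> real" and pmax B :: real and s t :: 'v
  assumes "finite V" and "E \<subseteq> V \<times> V" and "s \<in> V" and "t \<in> V"
    and "pmax < 1"
    and "\<forall>e\<in>E. 0 < pf e \<and> pf e \<le> pmax"
    and "\<forall>e\<in>E. 0 < w e"
    and "B \<ge> 0"
    and "\<exists>\<pi>1 \<pi>2. feasible_conn E w B s t \<pi>1 \<pi>2"
  shows "\<exists>\<pi>1 \<pi>2. optimal_conn E pf w B s t \<pi>1 \<pi>2 \<and>
           (\<forall>\<sigma>1 \<sigma>2. disjoint_segment \<pi>1 \<pi>2 \<sigma>1 \<sigma>2 \<longrightarrow> shortest_disjoint_segment E w \<sigma>1 \<sigma>2)"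
proof -
  have "finite E" using assms(1,2) finite_subset by blast
  then obtain p q where opt: "optimal_conn E pf w B s t p q"
    and least: "\<And>\<pi>1 \<pi>2. optimal_conn E pf w B s t \<pi>1 \<pi>2 \<Longrightarrow> co_weight w p q \<le> co_weight w \<pi>1 \<pi>2"
    using exists_optimal_conn_of_least_co_weight[OF _ assms(9), where pf = pf] by blast
  have p: "simple_path E s t p" and q: "simple_path E s t q" and "co_weight w p q \<le> B"
    using opt by (simp_all add: optimal_conn_def feasible_conn_def)
  have w: "\<forall>e\<in>E. 0 \<le> w e" and pf: "\<forall>e\<in>E. 0 \<le> pf e \<and> pf e \<le> 1"
    using assms(5-7) by fastforce+
  have "shortest_disjoint_segment E w \<sigma>1 \<sigma>2" if seg: "disjoint_segment p q \<sigma>1 \<sigma>2" for \<sigma>1 \<sigma>2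
    unfolding shortest_disjoint_segment_def
  proof (intro allI impI, rule ccontr)
    fix \<rho>1 \<rho>2
    assume \<rho>: "simple_path E (hd \<sigma>1) (last \<sigma>1) \<rho>1 \<and> simple_path E (hd \<sigma>1) (last \<sigma>1) \<rho>2 \<and>
      links \<rho>1 \<inter> links \<rho>2 = {}" and "\<not> pair_weight w \<sigma>1 \<sigma>2 \<le> pair_weight w \<rho>1 \<rho>2"
    then have "pair_weight w \<rho>1 \<rho>2 < pair_weight w \<sigma>1 \<sigma>2" by simp
    then obtain P1 P2 where "simple_path E s t P1" "simple_path E s t P2"
      and lighter: "co_weight w P1 P2 < co_weight w p q" and "surv_level pf p q \<le> surv_level pf P1 P2"
      using exchange_disjoint_segment_improves[OF w pf p q seg] \<rho> by blast
    then have "optimal_conn E pf w B s t P1 P2"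
      using opt \<open>co_weight w p q \<le> B\<close> by (force simp: optimal_conn_def feasible_conn_def)
    then show False using least lighter by fastforce
  qed
  then show ?thesis using opt by blast
qed

end
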